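(* Let $1\le t\le s$. Then $p\,\mathcal M^t_{p^s}\subset\mathcal M^{t-1}_{p^s}$, and for every $f\in\mathbb Z[z]_{p^t}$ multiplication by $\pi_s(f)$ maps $\mathcal M^t_{p^s}$ into itself and $\mathcal M^{t-1}_{p^s}$ into itself. The induced action of $\mathbb Z[z]_{p^t}$ on $\mathrm{gr}\,\mathcal M^t_{p^s}=\mathcal M^t_{p^s}/\mathcal M^{t-1}_{p^s}$ factors through the ring homomorphism $\rho_t:\mathbb Z[z]_{p^t}\to\mathbb F_p[z_1^{p^t},\dots,z_n^{p^t}]$, making $\mathrm{gr}\,\mathcal M^t_{p^s}$ an $\mathbb F_p[z_1^{p^t},\dots,z_n^{p^t}]$-module; and multiplication by $p$ induces a homomorphism of $\mathbb F_p[z_1^{p^t},\dots,z_n^{p^t}]$-modules $\mathrm{gr}\,\mathcal M^t_{p^s}\to\mathrm{gr}\,\mathcal M^{t-1}_{p^s}$ (where $\mathrm{gr}\,\mathcal M^{t-1}_{p^s}$ is regarded as an $\mathbb F_p[z^{p^t}]$-module by restriction from $\mathbb F_p[z^{p^{t-1}}]$, and $\mathrm{gr}\,\mathcal M^0_{p^s}=0$).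
   Context: Let $p$ be an odd prime, $g\ge1$, $n=2g+1$, with $p>n$; $z=(z_1,\dots,z_n)$; $\pi_s$ denotes reduction modulo $p^s$ on $\mathbb Z[z]^n$. Quasi-constants: $f\in\mathbb Z[z]$ is a quasi-constant modulo $p^r$ if $\partial f/\partial z_i\in p^r\mathbb Z[z]$ for all $i$; these form a ring $\mathbb Z[z]_{p^r}$. Every $f\in\mathbb Z[z]_{p^t}$ can be written as $f=\sum_d c_dz^d$ where $c_d$ is divisible by $p^{t-\tau(d)}$, with $\tau(d)$ the largest integer $\le t$ such that $p^{\tau(d)}$ divides all $d_i$. Define $\rho_t(f)\in\mathbb F_p[z_1^{p^t},\dots,z_n^{p^t}]$ as the reduction modulo $p$ of $\sum_{d:\,p^t\mid d_i\ \forall i}c_dz^d$. For a positive integer $r$ put $M_r=(p^r-1)/2$, $\Phi_{p^r}(x,z)=\prod_{i=1}^n(x-z_i)^{M_r}$, expand $\Big(\frac{\Phi_{p^r}}{x-z_1},\dots,\frac{\Phi_{p^r}}{x-z_n}\Big)=\sum_iP^i_{p^r}(z)x^i$ with $P^i_{p^r}(z)\in\mathbb Z[z]^n$, and set $I^{[lp^r-1]}_{p^r}(z)=P^{lp^r-1}_{p^r}(z)$. For $1\le t\le s$ define $\mathcal M^t_{p^s}=\{\pi_s(\sum_{r=1}^t\sum_{l=1}^g c_{r,l}(z)\,p^{s-r}I^{[lp^r-1]}_{p^r}(z)) : c_{r,l}\in\mathbb Z[z]_{p^r}\}$, $\mathcal M^0_{p^s}=0$. *)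

theory Defs
  imports "HOL-Library.Poly_Mapping" "HOL-Computational_Algebra.Polynomial"
begin

text \<open>Polynomials in the variables z_0, z_1, ... with integer coefficients:
  finitely supported maps from exponent vectors to coefficients.
  The paper's z_1..z_n are z_0..z_(n-1) here.\<close>
type_synonym mpoly = "(nat \<Rightarrow>\<^sub>0 nat) \<Rightarrow>\<^sub>0 int"

text \<open>Vectors in Z[z]^n: components indexed by i < n (components i >= n are unused / zero).\<close>
type_synonym mvec = "nat \<Rightarrow> mpoly"

definition Zz :: "nat \<Rightarrow> mpoly set" where
  "Zz n = {f. \<forall>d\<in>Poly_Mapping.keys f. Poly_Mapping.keys d \<subseteq> {..<n}}"

definition zvar :: "nat \<Rightarrow> mpoly" where
  "zvar i = Poly_Mapping.single (Poly_Mapping.single i 1) 1"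

definition pdiff :: "nat \<Rightarrow> mpoly \<Rightarrow> mpoly" where
  "pdiff i f = (\<Sum>(d::nat \<Rightarrow>\<^sub>0 nat)\<in>Poly_Mapping.keys f.
     Poly_Mapping.single (d - Poly_Mapping.single i 1)
       ((of_nat (Poly_Mapping.lookup d i) :: int) * Poly_Mapping.lookup f d))"

text \<open>Quasi-constants modulo p^r: the ring Z[z]_{p^r}.\<close>
definition QC :: "nat \<Rightarrow> nat \<Rightarrow> nat \<Rightarrow> mpoly set" where
  "QC n p r = {f \<in> Zz n. \<forall>i<n. \<forall>d. (int p) ^ r dvd Poly_Mapping.lookup (pdiff i f) d}"

definition red :: "int \<Rightarrow> mpoly \<Rightarrow> mpoly" where
  "red m f = Poly_Mapping.map (\<lambda>c. c mod m) f"

definition pis :: "nat \<Rightarrow> nat \<Rightarrow> mvec \<Rightarrow> mvec" where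
  "pis p s v = (\<lambda>i. red ((int p) ^ s) (v i))"

definition Mr :: "nat \<Rightarrow> nat \<Rightarrow> nat" where
  "Mr p r = (p ^ r - 1) div 2"

text \<open>The i-th component Phi_{p^r}(x,z)/(x - z_i), as a polynomial in x over Z[z].\<close>
definition PhiQuot :: "nat \<Rightarrow> nat \<Rightarrow> nat \<Rightarrow> nat \<Rightarrow> mpoly poly" where
  "PhiQuot n p r i = [:- zvar i, 1:] ^ (Mr p r - 1) *
     (\<Prod>j\<in>{..<n} - {i}. [:- zvar j, 1:] ^ Mr p r)"

definition Ivec :: "nat \<Rightarrow> nat \<Rightarrow> nat \<Rightarrow> nat \<Rightarrow> mvec" where
  "Ivec n p r l = (\<lambda>i. if i < n then coeff (PhiQuot n p r i) (l * p ^ r - 1) else 0)"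

text \<open>The submodule M^t_{p^s} (for t = 0 this is {0}).\<close>
definition Mset :: "nat \<Rightarrow> nat \<Rightarrow> nat \<Rightarrow> nat \<Rightarrow> nat \<Rightarrow> mvec set" where
  "Mset n g p s t = {pis p s (\<lambda>i. \<Sum>r\<in>{1..t}. \<Sum>l\<in>{1..g}.
        c r l * of_int ((int p) ^ (s - r)) * Ivec n p r l i)
      | c. \<forall>r\<in>{1..t}. \<forall>l\<in>{1..g}. c r l \<in> QC n p r}"

text \<open>F_p[z_1^{p^t},...,z_n^{p^t}], coefficients represented in [0,p).\<close>
definition FpZ :: "nat \<Rightarrow> nat \<Rightarrow> nat \<Rightarrow> mpoly set" where
  "FpZ n p t = {a \<in> Zz n. (\<forall>d\<in>Poly_Mapping.keys a. \<forall>i. p ^ t dvd Poly_Mapping.lookup d i)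
                        \<and> (\<forall>d. 0 \<le> Poly_Mapping.lookup a d \<and> Poly_Mapping.lookup a d < int p)}"

definition rho :: "nat \<Rightarrow> nat \<Rightarrow> mpoly \<Rightarrow> mpoly" where
  "rho p t f = (\<Sum>d\<in>{d\<in>Poly_Mapping.keys f. \<forall>i. p ^ t dvd Poly_Mapping.lookup d i}.
      Poly_Mapping.single d (Poly_Mapping.lookup f d mod int p))"

end

theory Submission
  imports Defs "HOL-Computational_Algebra.Primes"
begin

text \<open>
  Write \<open>M\<^sup>t\<close> as the reduction modulo \<open>p^s\<close> of the \<open>\<int>[z]\<^bsub>p^t\<^esub>\<close>-span of the
  vectors \<open>p^(s-r) I^[lp^r-1]\<close>; stability under quasi-constants is then immediate.
  For \<open>p M\<^sup>t \<subseteq> M^(t-1)\<close> one uses the factorisation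
  \<open>\<Phi>\<^bsub>p^r\<^esub>/(x - z\<^sub>i) = B^(p^v) \<cdot> \<Phi>\<^bsub>p^v\<^esub>/(x - z\<^sub>i)\<close> with
  \<open>B = \<Prod>\<^sub>j (x - z\<^sub>j)^M\<^bsub>r-v\<^esub>\<close>. Differentiating \<open>B^(p^v)\<close> in \<open>x\<close> and in \<open>z\<^sub>i\<close> shows
  that its coefficient of \<open>x^k\<close> is quasi-constant modulo \<open>p^v\<close> and, if \<open>p^u\<close> exactly
  divides \<open>k\<close>, equals \<open>p^(v-u)\<close> times a quasi-constant modulo \<open>p^u\<close>. Expanding with
  \<open>v = r - 1\<close> and inducting on \<open>r\<close> puts every term of \<open>p \<cdot> p^(s-r) I^[lp^r-1]\<close> into
  the span of level \<open>r - 1\<close>; the coefficients of \<open>x^j\<close> for \<open>j \<ge> (g+1)p^r - 1\<close> vanish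
  because \<open>n M\<^sub>r < (g+1) p^r\<close>.
  A quasi-constant modulo \<open>p^t\<close> has coefficients divisible by \<open>p\<close> at all monomials
  whose exponents are not all divisible by \<open>p^t\<close>. This makes \<open>\<rho>\<^sub>t\<close> multiplicative, and
  \<open>\<rho>\<^sub>t f = \<rho>\<^sub>t h\<close> forces \<open>f - h = p u\<close> with \<open>u\<close> quasi-constant modulo \<open>p^(t-1)\<close>.
\<close>

lemma lookup_map_if:
  "Poly_Mapping.lookup (Poly_Mapping.map h f) d =
     (if Poly_Mapping.lookup f d = 0 then 0 else h (Poly_Mapping.lookup f d))"
  by (simp add: Poly_Mapping.map.rep_eq when_def)

lemma lookup_red: "Poly_Mapping.lookup (red m f) d = Poly_Mapping.lookup f d mod m"
  by (simp add: red_def lookup_map_if)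

lemma lookup_of_int_mult:
  "Poly_Mapping.lookup (of_int c * (f::mpoly)) d = c * Poly_Mapping.lookup f d"
proof -
  have "of_int c * f = Poly_Mapping.map ((*) c) f"
    by (simp add: mult_map_scale_conv_mult flip: single_of_int)
  then show ?thesis by (simp add: lookup_map_if)
qed

lemma lookup_of_nat_mult [simp]:
  "Poly_Mapping.lookup (of_nat c * (f::mpoly)) d = int c * Poly_Mapping.lookup f d"
  using lookup_of_int_mult[of "int c" f d] by simp

lemma lookup_of_nat_power_mult [simp]:
  "Poly_Mapping.lookup (of_nat p ^ k * (f::mpoly)) d = int p ^ k * Poly_Mapping.lookup f d"
  using lookup_of_int_mult[of "int p ^ k" f d] by simp

lemma poly_mapping_sum_single:
  "f = (\<Sum>k\<in>Poly_Mapping.keys f. Poly_Mapping.single k (Poly_Mapping.lookup f k))"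
  by (rule poly_mapping_eqI) (auto simp: lookup_sum lookup_single when_def in_keys_iff)

definition coeffs_dvd :: "int \<Rightarrow> mpoly \<Rightarrow> bool" where
  "coeffs_dvd m f \<longleftrightarrow> (\<forall>d. m dvd Poly_Mapping.lookup f d)"

lemma coeffs_dvd_eq_mult_div:
  "coeffs_dvd m f \<Longrightarrow> f = of_int m * Poly_Mapping.map (\<lambda>c. c div m) f"
  by (rule poly_mapping_eqI) (auto simp: coeffs_dvd_def lookup_of_int_mult lookup_map_if)

lemma coeffs_dvd_iff: "coeffs_dvd m f \<longleftrightarrow> (\<exists>h. f = of_int m * h)"
  using coeffs_dvd_eq_mult_div by (auto simp: coeffs_dvd_def lookup_of_int_mult)

lemma coeffs_dvd_add: "coeffs_dvd m a \<Longrightarrow> coeffs_dvd m b \<Longrightarrow> coeffs_dvd m (a + b)"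
  by (simp add: coeffs_dvd_def lookup_add)

lemma coeffs_dvd_mult_left: "coeffs_dvd m a \<Longrightarrow> coeffs_dvd m (a * b)"
  by (auto simp: coeffs_dvd_iff mult.assoc)

lemma coeffs_dvd_mult_right: "coeffs_dvd m b \<Longrightarrow> coeffs_dvd m (a * b)"
  by (metis coeffs_dvd_mult_left mult.commute)

lemma coeffs_dvd_dvd_trans: "coeffs_dvd m a \<Longrightarrow> k dvd m \<Longrightarrow> coeffs_dvd k a"
  by (auto simp: coeffs_dvd_def intro: dvd_trans)

lemma coeffs_dvd_of_int_mult: "coeffs_dvd m (of_int m * a)"
  by (auto simp: coeffs_dvd_iff)

lemma red_eq_iff_coeffs_dvd: "red m a = red m b \<longleftrightarrow> coeffs_dvd m (a - b)"
  by (auto simp: poly_mapping_eq_iff lookup_red fun_eq_iff coeffs_dvd_def lookup_minus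
      mod_eq_dvd_iff)

lemma red_eq_iff_add_mult: "red m a = red m b \<longleftrightarrow> (\<exists>h. a = b + of_int m * h)"
  unfolding red_eq_iff_coeffs_dvd coeffs_dvd_iff by (metis add_diff_cancel_left' diff_add_cancel)

lemma red_idem: "red m (red m a) = red m a"
  by (rule poly_mapping_eqI) (simp add: lookup_red)

lemma red_add: "red m (a + b) = red m (red m a + red m b)"
  by (rule poly_mapping_eqI) (simp add: lookup_red lookup_add mod_add_eq)

lemma red_mult_left: "red m (red m a * b) = red m (a * b)"
proof -
  obtain h where "red m a = a + of_int m * h"
    using red_eq_iff_add_mult red_idem by blast
  then show ?thesis
    unfolding red_eq_iff_add_mult by (intro exI[of _ "h * b"]) (simp add: algebra_simps)
qed

lemma red_mult_right: "red m (a * red m b) = red m (a * b)"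
  using red_mult_left[of m b a] by (simp add: mult.commute)

lemma red_of_int_mult_self: "red m (of_int m * a) = 0"
  by (rule poly_mapping_eqI) (simp add: lookup_red lookup_of_int_mult)

lemma red_zero [simp]: "red m 0 = 0"
  by (rule poly_mapping_eqI) (simp add: lookup_red)

lemma red_cong_mult:
  assumes "red m a = red m a'" "red m b = red m b'"
  shows "red m (a * b) = red m (a' * b')"
  by (metis assms red_mult_left red_mult_right)

lemma red_cong_diff:
  assumes "red m a = red m a'" "red m b = red m b'"
  shows "red m (a - b) = red m (a' - b')"
proof -
  obtain h1 h2 where "a = a' + of_int m * h1" "b = b' + of_int m * h2"
    using assms unfolding red_eq_iff_add_mult by blast
  then show ?thesis
    unfolding red_eq_iff_add_mult by (intro exI[of _ "h1 - h2"]) (simp add: algebra_simps)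
qed

section \<open>Quasi-constants\<close>

lemma Zz_iff:
  "f \<in> Zz n \<longleftrightarrow> (\<forall>d. Poly_Mapping.lookup f d \<noteq> 0 \<longrightarrow> Poly_Mapping.keys d \<subseteq> {..<n})"
  by (auto simp: Zz_def in_keys_iff)

lemma Zz_0 [simp]: "0 \<in> Zz n"
  by (simp add: Zz_iff)

lemma Zz_1 [simp]: "1 \<in> Zz n"
  by (simp add: Zz_iff lookup_one when_def)

lemma Zz_add: "f \<in> Zz n \<Longrightarrow> h \<in> Zz n \<Longrightarrow> f + h \<in> Zz n"
  unfolding Zz_iff lookup_add by (metis add.left_neutral add.right_neutral)

lemma Zz_uminus: "f \<in> Zz n \<Longrightarrow> - f \<in> Zz n"
  by (auto simp: Zz_iff)

lemma Zz_diff: "f \<in> Zz n \<Longrightarrow> h \<in> Zz n \<Longrightarrow> f - h \<in> Zz n"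
  unfolding Zz_iff lookup_minus by (metis diff_zero diff_self)

lemma Zz_mult:
  assumes "f \<in> Zz n" "h \<in> Zz n"
  shows "f * h \<in> Zz n"
proof -
  have "Poly_Mapping.keys (a + b) \<subseteq> {..<n}"
    if "a \<in> Poly_Mapping.keys f" "b \<in> Poly_Mapping.keys h" for a b
    using keys_add[of a b] assms that unfolding Zz_def by blast
  then show ?thesis
    using keys_mult[of f h] unfolding Zz_def by blast
qed

lemma Zz_sum: "(\<And>a. a \<in> A \<Longrightarrow> F a \<in> Zz n) \<Longrightarrow> sum F A \<in> Zz n"
  by (induction A rule: infinite_finite_induct) (auto intro: Zz_add)

lemma Zz_map: "f \<in> Zz n \<Longrightarrow> Poly_Mapping.map h f \<in> Zz n"
  by (auto simp: Zz_iff lookup_map_if split: if_splits)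

lemma Zz_zvar: "i < n \<Longrightarrow> zvar i \<in> Zz n"
  by (auto simp: Zz_iff zvar_def lookup_single when_def)

text \<open>\<open>euler i\<close> is \<open>z\<^sub>i \<partial>/\<partial>z\<^sub>i\<close>: its coefficients carry the same divisibility information
  as those of \<open>pdiff i\<close> (see \<open>QC_iff_euler\<close>), but it does not shift exponents.\<close>

definition euler :: "nat \<Rightarrow> mpoly \<Rightarrow> mpoly" where
  "euler i f = Poly_Mapping.mapp (\<lambda>d c. int (Poly_Mapping.lookup d i) * c) f"

lemma lookup_euler:
  "Poly_Mapping.lookup (euler i f) d = int (Poly_Mapping.lookup d i) * Poly_Mapping.lookup f d"
  by (auto simp: euler_def lookup_mapp when_def in_keys_iff)

lemma euler_add: "euler i (f + h) = euler i f + euler i h"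
  by (rule poly_mapping_eqI) (simp add: lookup_euler lookup_add algebra_simps)

lemma euler_diff: "euler i (f - h) = euler i f - euler i h"
  by (rule poly_mapping_eqI) (simp add: lookup_euler lookup_minus algebra_simps)

lemma euler_0 [simp]: "euler i 0 = 0"
  by (rule poly_mapping_eqI) (simp add: lookup_euler)

lemma euler_1 [simp]: "euler i 1 = 0"
  by (rule poly_mapping_eqI) (simp add: lookup_euler lookup_one when_def)

lemma euler_sum: "euler i (sum F A) = (\<Sum>a\<in>A. euler i (F a))"
  by (induction A rule: infinite_finite_induct) (auto simp: euler_add)

lemma euler_single:
  "euler i (Poly_Mapping.single d c) = Poly_Mapping.single d (int (Poly_Mapping.lookup d i) * c)"
  by (rule poly_mapping_eqI) (simp add: lookup_euler lookup_single when_def)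

lemma euler_of_int_mult: "euler i (of_int c * f) = of_int c * euler i f"
  by (rule poly_mapping_eqI) (simp only: lookup_euler lookup_of_int_mult mult.left_commute)

lemma euler_mult: "euler i (f * h) = euler i f * h + f * euler i h"
proof -
  let ?S = "\<lambda>f k. Poly_Mapping.single k (Poly_Mapping.lookup f k)"
  have monomials: "euler i (?S f a * ?S h b) = euler i (?S f a) * ?S h b + ?S f a * euler i (?S h b)"
    for a b
    by (simp add: mult_single euler_single lookup_add algebra_simps flip: single_add)
  have "euler i (f * h) =
      euler i ((\<Sum>a\<in>Poly_Mapping.keys f. ?S f a) * (\<Sum>b\<in>Poly_Mapping.keys h. ?S h b))"
    by (simp flip: poly_mapping_sum_single)
  also have "\<dots> = (\<Sum>a\<in>Poly_Mapping.keys f. \<Sum>b\<in>Poly_Mapping.keys h.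
                    euler i (?S f a) * ?S h b + ?S f a * euler i (?S h b))"
    by (simp add: sum_product euler_sum monomials)
  also have "\<dots> = euler i (\<Sum>a\<in>Poly_Mapping.keys f. ?S f a) * (\<Sum>b\<in>Poly_Mapping.keys h. ?S h b)
      + (\<Sum>a\<in>Poly_Mapping.keys f. ?S f a) * euler i (\<Sum>b\<in>Poly_Mapping.keys h. ?S h b)"
    by (simp add: sum_product euler_sum sum.distrib)
  finally show ?thesis by (simp flip: poly_mapping_sum_single)
qed

lemma lookup_pdiff:
  "Poly_Mapping.lookup (pdiff i f) d' =
     int (Poly_Mapping.lookup (d' + Poly_Mapping.single i 1) i)
       * Poly_Mapping.lookup f (d' + Poly_Mapping.single i 1)"
proof -
  let ?e = "Poly_Mapping.single i (1::nat)"
  have shift: "((int (Poly_Mapping.lookup d i) * Poly_Mapping.lookup f d) when d - ?e = d') =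
      (if d = d' + ?e then int (Poly_Mapping.lookup d i) * Poly_Mapping.lookup f d else 0)" for d
  proof (cases "Poly_Mapping.lookup d i = 0")
    case True
    then have "d \<noteq> d' + ?e"
      by (metis add_eq_0_iff_both_eq_0 lookup_add lookup_single_eq one_neq_zero)
    then show ?thesis using True by (simp add: when_def)
  next
    case False
    then have "d - ?e = d' \<longleftrightarrow> d = d' + ?e"
      by (auto simp: poly_mapping_eq_iff fun_eq_iff lookup_add lookup_minus lookup_single
          when_def)
    then show ?thesis by (simp add: when_def)
  qed
  have "Poly_Mapping.lookup (pdiff i f) d' = (\<Sum>d\<in>Poly_Mapping.keys f.
      (int (Poly_Mapping.lookup d i) * Poly_Mapping.lookup f d) when d - ?e = d')"
    by (simp add: pdiff_def lookup_sum lookup_single)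
  also have "\<dots> = (\<Sum>d\<in>Poly_Mapping.keys f.
      if d = d' + ?e then int (Poly_Mapping.lookup d i) * Poly_Mapping.lookup f d else 0)"
    by (rule sum.cong[OF refl shift])
  finally show ?thesis by (simp add: sum.delta' in_keys_iff)
qed

lemma QC_iff_euler: "f \<in> QC n p r \<longleftrightarrow> f \<in> Zz n \<and> (\<forall>i<n. coeffs_dvd (int p ^ r) (euler i f))"
proof -
  have "(\<forall>d. int p ^ r dvd Poly_Mapping.lookup (pdiff i f) d) \<longleftrightarrow>
      coeffs_dvd (int p ^ r) (euler i f)" for i
  proof
    assume pdiff_dvd: "\<forall>d. int p ^ r dvd Poly_Mapping.lookup (pdiff i f) d"
    show "coeffs_dvd (int p ^ r) (euler i f)"
      unfolding coeffs_dvd_def lookup_euler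
    proof
      fix d
      show "int p ^ r dvd int (Poly_Mapping.lookup d i) * Poly_Mapping.lookup f d"
      proof (cases "Poly_Mapping.lookup d i = 0")
        case False
        then have "d - Poly_Mapping.single i 1 + Poly_Mapping.single i 1 = d"
          by (auto simp: poly_mapping_eq_iff fun_eq_iff lookup_add lookup_minus lookup_single
              when_def)
        then show ?thesis
          using pdiff_dvd[rule_format, of "d - Poly_Mapping.single i 1"] by (simp add: lookup_pdiff)
      qed simp
    qed
  qed (simp add: coeffs_dvd_def lookup_euler lookup_pdiff)
  then show ?thesis unfolding QC_def by auto
qed

lemma QC_add: "f \<in> QC n p r \<Longrightarrow> h \<in> QC n p r \<Longrightarrow> f + h \<in> QC n p r"
  by (simp add: QC_iff_euler Zz_add euler_add coeffs_dvd_add)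

lemma QC_diff: "f \<in> QC n p r \<Longrightarrow> h \<in> QC n p r \<Longrightarrow> f - h \<in> QC n p r"
  by (simp add: QC_iff_euler Zz_diff euler_diff coeffs_dvd_def lookup_minus)

lemma QC_mult: "f \<in> QC n p r \<Longrightarrow> h \<in> QC n p r \<Longrightarrow> f * h \<in> QC n p r"
  by (simp add: QC_iff_euler Zz_mult euler_mult coeffs_dvd_add coeffs_dvd_mult_left
      coeffs_dvd_mult_right)

lemma QC_mono: "f \<in> QC n p r \<Longrightarrow> r' \<le> r \<Longrightarrow> f \<in> QC n p r'"
  by (auto simp: QC_iff_euler intro: coeffs_dvd_dvd_trans le_imp_power_dvd)

lemma QC_0 [simp]: "0 \<in> QC n p r"
  by (simp add: QC_iff_euler coeffs_dvd_def lookup_euler)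

lemma power_dvd_power_mult_cancel:
  fixes p x :: int
  assumes "w \<le> v" "p \<noteq> 0" "p ^ v dvd p ^ w * x"
  shows "p ^ (v - w) dvd x"
proof -
  have "p ^ v = p ^ w * p ^ (v - w)"
    using assms(1) by (simp flip: power_add)
  then show ?thesis using assms(2,3) by simp
qed

lemma QC_div_prime_power:
  assumes e: "e \<in> QC n p v" and dvd: "coeffs_dvd (int p ^ w) e" and "w \<le> v" "p > 0"
  obtains e' where "e = of_int (int p ^ w) * e'" "e' \<in> QC n p (v - w)"
proof
  let ?e' = "Poly_Mapping.map (\<lambda>c. c div int p ^ w) e"
  show e_eq: "e = of_int (int p ^ w) * ?e'"
    using dvd by (rule coeffs_dvd_eq_mult_div)
  have "coeffs_dvd (int p ^ (v - w)) (euler i ?e')" if "i < n" for i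
  proof -
    have "coeffs_dvd (int p ^ v) (of_int (int p ^ w) * euler i ?e')"
      using e that e_eq unfolding QC_iff_euler by (metis euler_of_int_mult)
    then show ?thesis
      using assms(3,4) by (auto simp: coeffs_dvd_def lookup_of_int_mult
          intro: power_dvd_power_mult_cancel)
  qed
  moreover have "?e' \<in> Zz n"
    using e by (simp add: QC_def Zz_map)
  ultimately show "?e' \<in> QC n p (v - w)"
    by (simp add: QC_iff_euler)
qed

section \<open>Coefficients of \<open>p\<^sup>v\<close>-th powers\<close>

definition coeffs_Zz :: "nat \<Rightarrow> mpoly poly \<Rightarrow> bool" where
  "coeffs_Zz n G \<longleftrightarrow> (\<forall>k. coeff G k \<in> Zz n)"

lemma coeffs_Zz_mult: "coeffs_Zz n G \<Longrightarrow> coeffs_Zz n H \<Longrightarrow> coeffs_Zz n (G * H)"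
  by (auto simp: coeffs_Zz_def coeff_mult intro!: Zz_sum Zz_mult)

lemma coeffs_Zz_1: "coeffs_Zz n 1"
  by (auto simp: coeffs_Zz_def coeff_1)

lemma coeffs_Zz_power: "coeffs_Zz n G \<Longrightarrow> coeffs_Zz n (G ^ k)"
  by (induction k) (auto intro: coeffs_Zz_mult coeffs_Zz_1)

lemma coeffs_Zz_prod: "(\<And>a. a \<in> A \<Longrightarrow> coeffs_Zz n (F a)) \<Longrightarrow> coeffs_Zz n (prod F A)"
  by (induction A rule: infinite_finite_induct) (auto intro: coeffs_Zz_mult coeffs_Zz_1)

lemma coeffs_Zz_linear: "a \<in> Zz n \<Longrightarrow> b \<in> Zz n \<Longrightarrow> coeffs_Zz n [:a, b:]"
  by (auto simp: coeffs_Zz_def coeff_pCons split: nat.split)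

definition euler_poly :: "nat \<Rightarrow> mpoly poly \<Rightarrow> mpoly poly" where
  "euler_poly i G = map_poly (euler i) G"

lemma coeff_euler_poly: "coeff (euler_poly i G) k = euler i (coeff G k)"
  by (simp add: euler_poly_def coeff_map_poly)

lemma euler_poly_mult: "euler_poly i (G * H) = euler_poly i G * H + G * euler_poly i H"
  by (rule poly_eqI) (simp add: coeff_euler_poly coeff_mult euler_sum euler_mult sum.distrib)

lemma euler_poly_power_Suc:
  "euler_poly i (G ^ Suc m) = smult (of_nat (Suc m)) (G ^ m * euler_poly i G)"
proof (induction m)
  case (Suc m)
  have "euler_poly i (G ^ Suc (Suc m)) =
      euler_poly i G * G ^ Suc m + G * smult (of_nat (Suc m)) (G ^ m * euler_poly i G)"
    by (simp only: power_Suc[of G "Suc m"] euler_poly_mult Suc)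
  also have "\<dots> = smult 1 (G ^ Suc m * euler_poly i G)
      + smult (of_nat (Suc m)) (G ^ Suc m * euler_poly i G)"
    by (simp only: smult_one mult_smult_right) (simp add: ac_simps)
  also have "\<dots> = smult (of_nat (Suc (Suc m))) (G ^ Suc m * euler_poly i G)"
    by (simp only: smult_add_left[symmetric]) simp
  finally show ?case .
qed simp

lemma coeffs_dvd_euler_coeff_power: "coeffs_dvd (int N) (euler i (coeff (B ^ N) k))"
proof (cases N)
  case (Suc m)
  have "euler i (coeff (B ^ N) k) = coeff (euler_poly i (B ^ Suc m)) k"
    by (simp add: coeff_euler_poly Suc)
  also have "\<dots> = of_int (int N) * coeff (B ^ m * euler_poly i B) k"
    by (simp only: euler_poly_power_Suc coeff_smult) (simp add: Suc)
  finally show ?thesis by (simp only: coeffs_dvd_of_int_mult)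
qed (simp add: coeff_1 coeffs_dvd_def)

lemma coeffs_dvd_of_nat_mult_coeff_power: "coeffs_dvd (int N) (of_nat k * coeff (B ^ N) k)"
proof (cases "N = 0 \<or> k = 0")
  case False
  then obtain m j where N: "N = Suc m" and k: "k = Suc j"
    by (meson not0_implies_Suc)
  have "of_nat k * coeff (B ^ N) k = coeff (pderiv (B ^ Suc m)) j"
    by (simp add: coeff_pderiv N k)
  also have "\<dots> = of_int (int N) * coeff (B ^ m * pderiv B) j"
    by (simp only: pderiv_power_Suc mult_smult_left coeff_smult) (simp add: N)
  finally show ?thesis by (simp only: coeffs_dvd_of_int_mult)
qed (auto simp: coeff_1 coeffs_dvd_def)

lemma coeff_prime_power_power_QC:
  assumes "coeffs_Zz n B"
  shows "coeff (B ^ (p ^ v)) k \<in> QC n p v"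
  using coeffs_dvd_euler_coeff_power[of "p ^ v"] coeffs_Zz_power[OF assms]
  by (simp add: QC_iff_euler coeffs_Zz_def)

text \<open>If \<open>p^u\<close> exactly divides \<open>k \<noteq> 0\<close>, the divisibility of \<open>k \<cdot> coeff (B^(p^v)) k\<close>
  by \<open>p^v\<close> forces \<open>p^(v-u)\<close> to divide \<open>coeff (B^(p^v)) k\<close>.\<close>

lemma coeff_prime_power_power_decomp:
  assumes B: "coeffs_Zz n B" and p: "prime p"
  obtains u e where "u \<le> v" "p ^ u dvd k" "coeff (B ^ (p ^ v)) k = of_int (int p ^ (v - u)) * e"
    "e \<in> QC n p u"
proof (cases "p ^ v dvd k")
  case True
  then show ?thesis
    using that[of v "coeff (B ^ (p ^ v)) k"] coeff_prime_power_power_QC[OF B] by simp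
next
  case False
  then have "k \<noteq> 0" by (metis dvd_0_right)
  moreover have "\<not> is_unit p"
    using p not_prime_unit by blast
  ultimately obtain k' where k': "k = p ^ multiplicity p k * k'" "\<not> p dvd k'"
    using multiplicity_decompose' by metis
  define u where "u = multiplicity p k"
  have "u < v"
  proof (rule ccontr)
    assume "\<not> u < v"
    then have "p ^ v dvd p ^ u * k'"
      by (simp add: dvd_mult2 le_imp_power_dvd)
    with False k'(1) show False unfolding u_def by simp
  qed
  have dvd: "coeffs_dvd (int p ^ (v - u)) (coeff (B ^ (p ^ v)) k)"
    unfolding coeffs_dvd_def
  proof
    fix d
    let ?c = "Poly_Mapping.lookup (coeff (B ^ (p ^ v)) k) d"
    have "int k = int p ^ u * int k'"
      using k'(1) unfolding u_def by (metis of_nat_mult of_nat_power)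
    moreover have "int p ^ v dvd int k * ?c"
      using coeffs_dvd_of_nat_mult_coeff_power[of "p ^ v" k B] by (simp add: coeffs_dvd_def)
    ultimately have "int p ^ v dvd int p ^ u * (int k' * ?c)"
      by (simp add: mult.assoc)
    then have "int p ^ (v - u) dvd int k' * ?c"
      using \<open>u < v\<close> p by (intro power_dvd_power_mult_cancel) (auto simp: prime_gt_0_nat)
    moreover have "coprime (int p ^ (v - u)) (int k')"
      using p k'(2) by (simp add: prime_imp_coprime coprime_power_left_iff)
    ultimately show "int p ^ (v - u) dvd ?c"
      using coprime_dvd_mult_right_iff by blast
  qed
  obtain e where "coeff (B ^ (p ^ v)) k = of_int (int p ^ (v - u)) * e"
    "e \<in> QC n p (v - (v - u))"
    by (rule QC_div_prime_power[OF coeff_prime_power_power_QC[OF B] dvd])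
      (use p in \<open>auto simp: prime_gt_0_nat\<close>)
  moreover have "p ^ u dvd k"
    unfolding u_def by (rule multiplicity_dvd)
  ultimately show ?thesis
    using that[of u e] \<open>u < v\<close> by simp
qed

lemma two_Mr_Suc: "odd p \<Longrightarrow> 2 * Mr p a + 1 = p ^ a"
  unfolding Mr_def by (simp add: odd_pos)

lemma Mr_add_decomp:
  assumes "odd p" "v \<le> r"
  shows "Mr p r = p ^ v * Mr p (r - v) + Mr p v"
proof -
  have "p ^ r = p ^ v * p ^ (r - v)"
    using assms(2) by (simp flip: power_add)
  also have "\<dots> = 2 * (p ^ v * Mr p (r - v)) + p ^ v"
    by (simp add: algebra_simps flip: two_Mr_Suc[OF assms(1)])
  finally show ?thesis
    using two_Mr_Suc[OF assms(1), of r] two_Mr_Suc[OF assms(1), of v] by linarith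
qed

lemma Mr_ge_1:
  assumes "odd p" "p > 1" "v \<ge> 1"
  shows "Mr p v \<ge> 1"
proof -
  have "p ^ v \<ge> 3"
    using assms self_le_power[of p v] by presburger
  then show ?thesis
    using two_Mr_Suc[OF assms(1), of v] by linarith
qed

abbreviation x_minus_z :: "nat \<Rightarrow> mpoly poly" where
  "x_minus_z j \<equiv> [:- zvar j, 1:]"

lemma PhiQuot_factor:
  assumes "odd p" "p > 1" "1 \<le> v" "v \<le> r" "i < n"
  shows "PhiQuot n p r i = (\<Prod>j\<in>{..<n}. x_minus_z j ^ Mr p (r - v)) ^ (p ^ v) * PhiQuot n p v i"
proof -
  let ?a = "Mr p (r - v) * p ^ v"
  have a_Mr: "?a + (Mr p v - 1) = Mr p r - 1" "?a + Mr p v = Mr p r"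
    using Mr_add_decomp[OF assms(1,4)] Mr_ge_1[OF assms(1-3)] by (simp_all add: mult.commute)
  have "(\<Prod>j\<in>{..<n}. x_minus_z j ^ Mr p (r - v)) ^ (p ^ v) = (\<Prod>j\<in>{..<n}. x_minus_z j ^ ?a)"
    by (simp add: prod_power_distrib power_mult)
  also have "\<dots> = x_minus_z i ^ ?a * (\<Prod>j\<in>{..<n} - {i}. x_minus_z j ^ ?a)"
    using assms(5) by (subst prod.remove[of _ i]) auto
  finally have "(\<Prod>j\<in>{..<n}. x_minus_z j ^ Mr p (r - v)) ^ (p ^ v) * PhiQuot n p v i
      = (x_minus_z i ^ ?a * x_minus_z i ^ (Mr p v - 1))
        * ((\<Prod>j\<in>{..<n} - {i}. x_minus_z j ^ ?a) * (\<Prod>j\<in>{..<n} - {i}. x_minus_z j ^ Mr p v))"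
    unfolding PhiQuot_def by (simp only: ac_simps)
  also have "\<dots> = PhiQuot n p r i"
    unfolding PhiQuot_def by (simp only: power_add[symmetric] prod.distrib[symmetric] a_Mr)
  finally show ?thesis ..
qed

lemma degree_PhiQuot:
  assumes "i < n"
  shows "degree (PhiQuot n p r i) \<le> (Mr p r - 1) + (n - 1) * Mr p r"
proof -
  have deg_power: "degree (x_minus_z j ^ k) \<le> k" for j k
    using degree_power_le[of "x_minus_z j" k] by simp
  have "degree (\<Prod>j\<in>{..<n} - {i}. x_minus_z j ^ Mr p r)
      \<le> (\<Sum>j\<in>{..<n} - {i}. degree (x_minus_z j ^ Mr p r))"
    using degree_prod_sum_le[of "{..<n} - {i}" "\<lambda>j. x_minus_z j ^ Mr p r"] by (simp add: o_def)
  also have "\<dots> \<le> (n - 1) * Mr p r"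
    using sum_mono[of "{..<n} - {i}" "\<lambda>j. degree (x_minus_z j ^ Mr p r)" "\<lambda>_. Mr p r"] deg_power
      assms by simp
  finally show ?thesis
    unfolding PhiQuot_def using degree_mult_le deg_power[of i "Mr p r - 1"]
    by (meson add_mono order_trans)
qed

text \<open>Here the hypothesis \<open>n = 2g + 1\<close> enters: \<open>n M\<^sub>r < (g + 1) p^r\<close>.\<close>

lemma coeff_PhiQuot_beyond_g:
  assumes "odd p" "p > 1" "n = 2 * g + 1" "i < n" "l > g" "r \<ge> 1"
  shows "coeff (PhiQuot n p r i) (l * p ^ r - 1) = 0"
proof -
  have Mr: "Mr p r \<ge> 1" "2 * Mr p r + 1 = p ^ r"
    using Mr_ge_1 two_Mr_Suc assms by blast+
  have "2 * (n * Mr p r) < n * p ^ r"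
    using Mr(2) assms(3) by (metis add_gr_0 less_add_one mult.left_commute mult_less_cancel1
        zero_less_one)
  also have "\<dots> \<le> (2 * l) * p ^ r"
    using assms(3,5) by (intro mult_le_mono1) simp
  finally have "n * Mr p r < l * p ^ r" by simp
  moreover have "(Mr p r - 1) + (n - 1) * Mr p r = n * Mr p r - 1" "1 \<le> n * Mr p r"
    using Mr(1) assms(4) by (cases n; simp add: algebra_simps)+
  ultimately have "degree (PhiQuot n p r i) < l * p ^ r - 1"
    using degree_PhiQuot[OF assms(4), of p r] by linarith
  then show ?thesis by (rule coeff_eq_0)
qed

lemma coeffs_Zz_prod_x_minus_z_power: "coeffs_Zz n (\<Prod>j\<in>{..<n}. x_minus_z j ^ a)"
  by (intro coeffs_Zz_prod coeffs_Zz_power coeffs_Zz_linear Zz_uminus Zz_zvar Zz_1) auto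

definition Pvec :: "nat \<Rightarrow> nat \<Rightarrow> nat \<Rightarrow> nat \<Rightarrow> mvec" where
  "Pvec n p r j = (\<lambda>i. if i < n then coeff (PhiQuot n p r i) j else 0)"

lemma Ivec_eq_Pvec: "Ivec n p r l = Pvec n p r (l * p ^ r - 1)"
  unfolding Ivec_def Pvec_def ..

definition Msum :: "nat \<Rightarrow> nat \<Rightarrow> nat \<Rightarrow> nat \<Rightarrow> nat \<Rightarrow> (nat \<Rightarrow> nat \<Rightarrow> mpoly) \<Rightarrow> mvec" where
  "Msum n g p s t c = (\<lambda>i. \<Sum>r\<in>{1..t}. \<Sum>l\<in>{1..g}.
        c r l * of_int ((int p) ^ (s - r)) * Ivec n p r l i)"

definition Mcoeffs :: "nat \<Rightarrow> nat \<Rightarrow> nat \<Rightarrow> nat \<Rightarrow> (nat \<Rightarrow> nat \<Rightarrow> mpoly) \<Rightarrow> bool" where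
  "Mcoeffs n g p t c \<longleftrightarrow> (\<forall>r\<in>{1..t}. \<forall>l\<in>{1..g}. c r l \<in> QC n p r)"

text \<open>Working with unreduced lifts of \<open>M\<^sup>t\<close> avoids reducing modulo \<open>p^s\<close> after every
  ring operation.\<close>

definition Mlift :: "nat \<Rightarrow> nat \<Rightarrow> nat \<Rightarrow> nat \<Rightarrow> nat \<Rightarrow> mvec set" where
  "Mlift n g p s t = {y. \<exists>c. Mcoeffs n g p t c \<and> pis p s y = pis p s (Msum n g p s t c)}"

lemma Mset_eq_image_Mlift: "Mset n g p s t = pis p s ` Mlift n g p s t"
  unfolding Mset_def Mlift_def Mcoeffs_def Msum_def by auto

lemma Mset_obtain_Msum:
  assumes "x \<in> Mset n g p s t"
  obtains c where "Mcoeffs n g p t c" "x = pis p s (Msum n g p s t c)"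
  using assms unfolding Mset_def Mcoeffs_def Msum_def by blast

lemma pis_eq_iff: "pis p s y = pis p s y' \<longleftrightarrow> (\<forall>i. red (int p ^ s) (y i) = red (int p ^ s) (y' i))"
  by (simp add: pis_def fun_eq_iff)

lemma Mlift_zero: "(\<lambda>i. 0) \<in> Mlift n g p s t"
  unfolding Mlift_def Mcoeffs_def by (intro CollectI exI[of _ "\<lambda>r l. 0"]) (simp add: Msum_def)

lemma Mlift_add:
  assumes "y1 \<in> Mlift n g p s t" "y2 \<in> Mlift n g p s t"
  shows "(\<lambda>i. y1 i + y2 i) \<in> Mlift n g p s t"
proof -
  obtain c1 where c1: "Mcoeffs n g p t c1" "pis p s y1 = pis p s (Msum n g p s t c1)"
    using assms(1) unfolding Mlift_def by blast
  obtain c2 where c2: "Mcoeffs n g p t c2" "pis p s y2 = pis p s (Msum n g p s t c2)"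
    using assms(2) unfolding Mlift_def by blast
  have "Mcoeffs n g p t (\<lambda>r l. c1 r l + c2 r l)"
    using c1(1) c2(1) by (simp add: Mcoeffs_def QC_add)
  moreover have "red (int p ^ s) (y1 i + y2 i) =
      red (int p ^ s) (Msum n g p s t (\<lambda>r l. c1 r l + c2 r l) i)" for i
  proof -
    have "Msum n g p s t (\<lambda>r l. c1 r l + c2 r l) i = Msum n g p s t c1 i + Msum n g p s t c2 i"
      by (simp add: Msum_def sum.distrib distrib_right)
    then show ?thesis
      using c1(2) c2(2) unfolding pis_eq_iff by (metis red_add)
  qed
  ultimately show ?thesis
    unfolding Mlift_def pis_eq_iff by blast
qed

lemma Mlift_sum:
  assumes "finite A" "\<And>a. a \<in> A \<Longrightarrow> (\<lambda>i. G a i) \<in> Mlift n g p s t"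
  shows "(\<lambda>i. \<Sum>a\<in>A. G a i) \<in> Mlift n g p s t"
  using assms by (induction A rule: finite_induct) (auto simp: Mlift_zero intro!: Mlift_add)

lemma Mlift_mult_QC:
  assumes "f \<in> QC n p t" "y \<in> Mlift n g p s t"
  shows "(\<lambda>i. f * y i) \<in> Mlift n g p s t"
proof -
  obtain c where c: "Mcoeffs n g p t c" "pis p s y = pis p s (Msum n g p s t c)"
    using assms(2) unfolding Mlift_def by blast
  have "Mcoeffs n g p t (\<lambda>r l. f * c r l)"
    using c(1) QC_mono[OF assms(1)] by (auto simp: Mcoeffs_def intro: QC_mult)
  moreover have "red (int p ^ s) (f * y i) = red (int p ^ s) (Msum n g p s t (\<lambda>r l. f * c r l) i)"
    for i
  proof -
    have "Msum n g p s t (\<lambda>r l. f * c r l) i = f * Msum n g p s t c i"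
      by (simp add: Msum_def sum_distrib_left mult.assoc)
    then show ?thesis
      using c(2) unfolding pis_eq_iff by (metis red_mult_right)
  qed
  ultimately show ?thesis
    unfolding Mlift_def pis_eq_iff by blast
qed

lemma Mlift_mono:
  assumes "t' \<le> t" "y \<in> Mlift n g p s t'"
  shows "y \<in> Mlift n g p s t"
proof -
  obtain c where c: "Mcoeffs n g p t' c" "pis p s y = pis p s (Msum n g p s t' c)"
    using assms(2) unfolding Mlift_def by blast
  let ?c = "\<lambda>r l. if r \<le> t' then c r l else 0"
  have "Mcoeffs n g p t ?c"
    using c(1) by (auto simp: Mcoeffs_def)
  moreover have "Msum n g p s t ?c = Msum n g p s t' c"
  proof
    fix i
    have "Msum n g p s t ?c i = (\<Sum>r\<in>{1..t}. if r \<le> t' then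
        (\<Sum>l\<in>{1..g}. c r l * of_int ((int p) ^ (s - r)) * Ivec n p r l i) else 0)"
      unfolding Msum_def by (intro sum.cong) auto
    also have "\<dots> = (\<Sum>r\<in>{r\<in>{1..t}. r \<le> t'}. \<Sum>l\<in>{1..g}.
        c r l * of_int ((int p) ^ (s - r)) * Ivec n p r l i)"
      by (subst sum.inter_filter) auto
    also have "{r\<in>{1..t}. r \<le> t'} = {1..t'}"
      using assms(1) by auto
    finally show "Msum n g p s t ?c i = Msum n g p s t' c i"
      unfolding Msum_def by simp
  qed
  ultimately show ?thesis
    using c(2) unfolding Mlift_def by auto
qed

lemma Mlift_multiple_p_power_s: "(\<lambda>i. of_int (int p ^ s) * y i) \<in> Mlift n g p s t"
proof -
  have "pis p s (\<lambda>i. of_int (int p ^ s) * y i) = pis p s (Msum n g p s t (\<lambda>r l. 0))"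
    unfolding pis_eq_iff red_of_int_mult_self by (simp add: Msum_def)
  then show ?thesis
    unfolding Mlift_def Mcoeffs_def by (intro CollectI exI[of _ "\<lambda>r l. 0"]) simp
qed

lemma Mlift_generator:
  assumes "1 \<le> r" "r \<le> t" "1 \<le> l" "l \<le> g" "c \<in> QC n p r"
  shows "(\<lambda>i. c * of_int ((int p) ^ (s - r)) * Ivec n p r l i) \<in> Mlift n g p s t"
proof -
  let ?c = "\<lambda>r' l'. if r' = r \<and> l' = l then c else 0"
  have "Mcoeffs n g p t ?c"
    using assms(5) by (auto simp: Mcoeffs_def)
  moreover have "Msum n g p s t ?c = (\<lambda>i. c * of_int ((int p) ^ (s - r)) * Ivec n p r l i)"
  proof
    fix i
    let ?Y = "\<lambda>r l. of_int ((int p) ^ (s - r)) * Ivec n p r l i"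
    have inner: "(\<Sum>l'\<in>{1..g}. ?c r' l' * ?Y r' l') = (if r' = r then c * ?Y r l else 0)" for r'
    proof (cases "r' = r")
      case True
      then have "(\<Sum>l'\<in>{1..g}. ?c r' l' * ?Y r' l') = (\<Sum>l'\<in>{1..g}. if l' = l then c * ?Y r l else 0)"
        by (intro sum.cong) auto
      then show ?thesis
        using True assms(3,4) by simp
    qed simp
    have "Msum n g p s t ?c i = (\<Sum>r'\<in>{1..t}. \<Sum>l'\<in>{1..g}. ?c r' l' * ?Y r' l')"
      unfolding Msum_def by (simp add: mult.assoc)
    also have "\<dots> = c * ?Y r l"
      using assms(1,2) by (simp only: inner) simp
    finally show "Msum n g p s t ?c i = c * of_int ((int p) ^ (s - r)) * Ivec n p r l i"
      by (simp add: mult.assoc)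
  qed
  ultimately show ?thesis
    unfolding Mlift_def by (intro CollectI exI[of _ ?c]) simp
qed

lemma Mset_mult_QC:
  assumes "f \<in> QC n p t" "x \<in> Mset n g p s t"
  shows "pis p s (\<lambda>i. red (int p ^ s) f * x i) \<in> Mset n g p s t"
proof -
  obtain y where y: "y \<in> Mlift n g p s t" "x = pis p s y"
    using assms(2) unfolding Mset_eq_image_Mlift by blast
  have "pis p s (\<lambda>i. red (int p ^ s) f * x i) = pis p s (\<lambda>i. f * y i)"
    unfolding y(2) pis_def by (simp only: red_mult_left red_mult_right)
  moreover have "(\<lambda>i. f * y i) \<in> Mlift n g p s t"
    using assms(1) y(1) by (rule Mlift_mult_QC)
  ultimately show ?thesis
    unfolding Mset_eq_image_Mlift by simp
qed

section \<open>Multiplication by \<open>p\<close> lowers the level\<close>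

lemma Pvec_factor:
  assumes "odd p" "p > 1" "1 \<le> v" "v \<le> r"
  shows "Pvec n p r j i = (\<Sum>k\<le>j.
    coeff ((\<Prod>j\<in>{..<n}. x_minus_z j ^ Mr p (r - v)) ^ (p ^ v)) k * Pvec n p v (j - k) i)"
  using PhiQuot_factor[OF assms] by (simp add: Pvec_def coeff_mult)

lemma Pvec_in_Mlift_top:
  assumes "odd p" "p > 1" "n = 2 * g + 1" "1 \<le> r" "c \<in> QC n p r" "p ^ r dvd j + 1"
  shows "(\<lambda>i. c * of_int (int p ^ (s - r)) * Pvec n p r j i) \<in> Mlift n g p s r"
proof -
  obtain l where l: "j + 1 = p ^ r * l"
    using assms(6) by blast
  then have "l \<ge> 1" "j = l * p ^ r - 1"
    by (cases l; simp add: mult.commute)+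
  show ?thesis
  proof (cases "l \<le> g")
    case True
    then show ?thesis
      using Mlift_generator[of r r l g c n p s] assms \<open>l \<ge> 1\<close> \<open>j = l * p ^ r - 1\<close>
      by (simp add: Ivec_eq_Pvec)
  next
    case False
    then have "Pvec n p r j = (\<lambda>i. 0)"
      using coeff_PhiQuot_beyond_g[OF assms(1-3)] assms(4) \<open>j = l * p ^ r - 1\<close>
      by (auto simp: Pvec_def)
    then show ?thesis by (simp add: Mlift_zero)
  qed
qed

text \<open>For \<open>0 < v < r\<close>, expand \<open>P\<^sup>j\<^bsub>p^r\<^esub>\<close> by
  \<open>Pvec_factor\<close>; each coefficient of the \<open>p^v\<close>-th power contributes \<open>p^(v-u)\<close> times a
  quasi-constant modulo \<open>p^u\<close> with \<open>p^u | k\<close>, so induction on \<open>r\<close> applies at level \<open>u\<close>.\<close>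

lemma Pvec_in_Mlift:
  assumes p: "prime p" "odd p" and n: "n = 2 * g + 1"
  shows "r \<le> s \<Longrightarrow> v \<le> r \<Longrightarrow> c \<in> QC n p v \<Longrightarrow> p ^ v dvd j + 1 \<Longrightarrow>
    (\<lambda>i. c * of_int (int p ^ (s - v)) * Pvec n p r j i) \<in> Mlift n g p s v"
proof (induction r arbitrary: v j c rule: less_induct)
  case (less r)
  have p1: "p > 1"
    using p prime_gt_1_nat by blast
  consider "v = 0" | "v = r" "1 \<le> v" | "1 \<le> v" "v < r"
    using less.prems(2) by linarith
  then show ?case
  proof cases
    case 1
    then show ?thesis
      using Mlift_multiple_p_power_s[of p s "\<lambda>i. c * Pvec n p r j i"] by (simp add: ac_simps)
  next
    case 2
    then show ?thesis
      using Pvec_in_Mlift_top[OF p(2) p1 n] less.prems by simp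
  next
    case 3
    let ?C = "(\<Prod>j\<in>{..<n}. x_minus_z j ^ Mr p (r - v)) ^ (p ^ v)"
    have "(\<lambda>i. c * of_int (int p ^ (s - v)) * coeff ?C k * Pvec n p v (j - k) i) \<in> Mlift n g p s v"
      if "k \<le> j" for k
    proof -
      obtain u e where u: "u \<le> v" "p ^ u dvd k" "coeff ?C k = of_int (int p ^ (v - u)) * e"
        "e \<in> QC n p u"
        using coeff_prime_power_power_decomp[OF coeffs_Zz_prod_x_minus_z_power p(1)] .
      have "p ^ u dvd (j + 1) - k"
        using less.prems(4) u(1,2) by (meson dvd_diff_nat dvd_trans le_imp_power_dvd)
      then have "(\<lambda>i. (c * e) * of_int (int p ^ (s - u)) * Pvec n p v (j - k) i) \<in> Mlift n g p s u"
        using less.IH[of v u "c * e" "j - k"] 3 less.prems u QC_mult[OF QC_mono] that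
        by (simp add: Suc_diff_le)
      moreover have "of_int (int p ^ (s - v)) * of_int (int p ^ (v - u)) = (of_int (int p ^ (s - u)) :: mpoly)"
        using u(1) 3 less.prems(1) by (simp flip: power_add)
      ultimately show ?thesis
        using Mlift_mono[OF u(1)] by (simp add: u(3) ac_simps)
    qed
    then have "(\<lambda>i. \<Sum>k\<le>j. c * of_int (int p ^ (s - v)) * coeff ?C k * Pvec n p v (j - k) i)
        \<in> Mlift n g p s v"
      by (intro Mlift_sum) auto
    then show ?thesis
      using Pvec_factor[OF p(2) p1 3(1) less_imp_le[OF 3(2)]]
      by (simp add: sum_distrib_left mult.assoc)
  qed
qed

lemma Ivec_in_Mlift_pred:
  assumes p: "prime p" "odd p" and n: "n = 2 * g + 1"
    and r: "1 \<le> r" "r \<le> s" and q: "q \<in> QC n p (r - 1)" and l: "1 \<le> l"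
  shows "(\<lambda>i. q * of_int (int p ^ (s - (r - 1))) * Ivec n p r l i) \<in> Mlift n g p s (r - 1)"
proof -
  have "l * p ^ r - 1 + 1 = l * p ^ r"
    using l p(1) by (simp add: prime_gt_0_nat)
  then have "p ^ (r - 1) dvd l * p ^ r - 1 + 1"
    by (simp add: le_imp_power_dvd)
  then show ?thesis
    using Pvec_in_Mlift[OF p n r(2), of "r - 1" q] q by (simp add: Ivec_eq_Pvec)
qed

lemma p_Msum_in_Mlift_pred:
  assumes p: "prime p" "odd p" and n: "n = 2 * g + 1" and ts: "t \<le> s"
    and q: "\<forall>r\<in>{1..t}. \<forall>l\<in>{1..g}. q r l \<in> QC n p (r - 1)"
  shows "(\<lambda>i. of_nat p * Msum n g p s t q i) \<in> Mlift n g p s (t - 1)"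
proof -
  have "(\<lambda>i. of_nat p * (q r l * of_int (int p ^ (s - r)) * Ivec n p r l i)) \<in> Mlift n g p s (t - 1)"
    if rl: "r \<in> {1..t}" "l \<in> {1..g}" for r l
  proof -
    have "s - (r - 1) = Suc (s - r)"
      using rl ts by auto
    then have "(\<lambda>i. of_nat p * (q r l * of_int (int p ^ (s - r)) * Ivec n p r l i))
        = (\<lambda>i. q r l * of_int (int p ^ (s - (r - 1))) * Ivec n p r l i)"
      by (simp add: ac_simps)
    moreover have "(\<lambda>i. q r l * of_int (int p ^ (s - (r - 1))) * Ivec n p r l i) \<in> Mlift n g p s (r - 1)"
      using Ivec_in_Mlift_pred[OF p n] rl ts q by auto
    ultimately show ?thesis
      using Mlift_mono[OF diff_le_mono[of r t 1]] rl by simp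
  qed
  then show ?thesis
    unfolding Msum_def sum_distrib_left by (intro Mlift_sum) auto
qed

lemma Mset_mult_p:
  assumes p: "prime p" "odd p" and n: "n = 2 * g + 1" and ts: "t \<le> s"
    and x: "x \<in> Mset n g p s t"
  shows "pis p s (\<lambda>i. of_nat p * x i) \<in> Mset n g p s (t - 1)"
proof -
  obtain c where c: "Mcoeffs n g p t c" "x = pis p s (Msum n g p s t c)"
    using x by (rule Mset_obtain_Msum)
  have "(\<lambda>i. of_nat p * Msum n g p s t c i) \<in> Mlift n g p s (t - 1)"
    using c(1) by (intro p_Msum_in_Mlift_pred[OF p n ts])
      (auto simp: Mcoeffs_def intro: QC_mono[OF _ diff_le_self])
  moreover have "pis p s (\<lambda>i. of_nat p * x i) = pis p s (\<lambda>i. of_nat p * Msum n g p s t c i)"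
    unfolding c(2) pis_def by (rule ext) (rule red_mult_right)
  ultimately show ?thesis
    unfolding Mset_eq_image_Mlift by simp
qed

section \<open>The reduction map \<open>\<rho>\<^sub>t\<close>\<close>

definition exps_dvd :: "nat \<Rightarrow> nat \<Rightarrow> (nat \<Rightarrow>\<^sub>0 nat) \<Rightarrow> bool" where
  "exps_dvd p t d \<longleftrightarrow> (\<forall>i. p ^ t dvd Poly_Mapping.lookup d i)"

lemma exps_dvd_add: "exps_dvd p t a \<Longrightarrow> exps_dvd p t b \<Longrightarrow> exps_dvd p t (a + b)"
  by (simp add: exps_dvd_def lookup_add)

definition exps_dvd_part :: "nat \<Rightarrow> nat \<Rightarrow> mpoly \<Rightarrow> mpoly" where
  "exps_dvd_part p t f = Poly_Mapping.mapp (\<lambda>d c. if exps_dvd p t d then c else 0) f"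

lemma lookup_exps_dvd_part:
  "Poly_Mapping.lookup (exps_dvd_part p t f) d =
     (if exps_dvd p t d then Poly_Mapping.lookup f d else 0)"
  by (auto simp: exps_dvd_part_def lookup_mapp when_def in_keys_iff)

lemma lookup_rho:
  "Poly_Mapping.lookup (rho p t f) d =
     (if exps_dvd p t d then Poly_Mapping.lookup f d mod int p else 0)"
proof -
  have "Poly_Mapping.lookup (rho p t f) d = (\<Sum>d'\<in>{d \<in> Poly_Mapping.keys f. exps_dvd p t d}.
      if d' = d then Poly_Mapping.lookup f d' mod int p else 0)"
    unfolding rho_def exps_dvd_def lookup_sum lookup_single by (intro sum.cong) (auto simp: when_def)
  then show ?thesis
    by (auto simp: sum.delta' in_keys_iff)
qed

lemma rho_eq_red_exps_dvd_part: "rho p t f = red (int p) (exps_dvd_part p t f)"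
  by (rule poly_mapping_eqI) (simp add: lookup_rho lookup_red lookup_exps_dvd_part)

lemma red_exps_dvd_part_cong:
  "red m a = red m b \<Longrightarrow> red m (exps_dvd_part p t a) = red m (exps_dvd_part p t b)"
  by (simp add: poly_mapping_eq_iff fun_eq_iff lookup_red lookup_exps_dvd_part)

lemma exps_dvd_part_mult:
  "exps_dvd_part p t (exps_dvd_part p t a * exps_dvd_part p t b) =
     exps_dvd_part p t a * exps_dvd_part p t b"
proof (rule poly_mapping_eqI)
  fix d
  have "exps_dvd p t d" if d: "d \<in> Poly_Mapping.keys (exps_dvd_part p t a * exps_dvd_part p t b)"
  proof -
    obtain x y where "d = x + y" "x \<in> Poly_Mapping.keys (exps_dvd_part p t a)"
      "y \<in> Poly_Mapping.keys (exps_dvd_part p t b)"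
      using d keys_mult[of "exps_dvd_part p t a" "exps_dvd_part p t b"] by blast
    then show ?thesis
      by (auto simp: in_keys_iff lookup_exps_dvd_part intro: exps_dvd_add split: if_splits)
  qed
  then show "Poly_Mapping.lookup (exps_dvd_part p t (exps_dvd_part p t a * exps_dvd_part p t b)) d
      = Poly_Mapping.lookup (exps_dvd_part p t a * exps_dvd_part p t b) d"
    by (auto simp: lookup_exps_dvd_part in_keys_iff)
qed

text \<open>If \<open>p^t \<nmid> d\<^sub>i\<close>, then \<open>p^t | d\<^sub>i f\<^sub>d\<close> forces \<open>p | f\<^sub>d\<close>.\<close>

lemma QC_coeff_dvd_p:
  assumes f: "f \<in> QC n p t" and p: "prime p" and d: "\<not> exps_dvd p t d"
  shows "int p dvd Poly_Mapping.lookup f d"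
proof (rule ccontr)
  assume not_dvd: "\<not> int p dvd Poly_Mapping.lookup f d"
  obtain i where i: "\<not> p ^ t dvd Poly_Mapping.lookup d i"
    using d unfolding exps_dvd_def by blast
  then have "i \<in> Poly_Mapping.keys d"
    by (metis dvd_0_right in_keys_iff)
  moreover have "Poly_Mapping.lookup f d \<noteq> 0"
    using not_dvd by auto
  ultimately have "i < n"
    using f unfolding QC_def Zz_iff by blast
  then have "int p ^ t dvd int (Poly_Mapping.lookup d i) * Poly_Mapping.lookup f d"
    using f by (simp add: QC_iff_euler coeffs_dvd_def lookup_euler)
  moreover have "coprime (int p ^ t) (Poly_Mapping.lookup f d)"
    using not_dvd p by (simp add: prime_imp_coprime_int coprime_power_left_iff prime_nat_iff_prime)
  ultimately have "int p ^ t dvd int (Poly_Mapping.lookup d i)"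
    using coprime_dvd_mult_left_iff by blast
  with i show False
    by (metis of_nat_dvd_iff of_nat_power)
qed

lemma red_p_QC_eq_red_exps_dvd_part:
  assumes "f \<in> QC n p t" "prime p"
  shows "red (int p) f = red (int p) (exps_dvd_part p t f)"
  using QC_coeff_dvd_p[OF assms]
  by (auto simp: red_eq_iff_coeffs_dvd coeffs_dvd_def lookup_minus lookup_exps_dvd_part)

lemma rho_add: "rho p t (f + h) = red (int p) (rho p t f + rho p t h)"
  by (rule poly_mapping_eqI) (simp add: lookup_rho lookup_red lookup_add mod_add_eq)

lemma rho_mult:
  assumes "f \<in> QC n p t" "h \<in> QC n p t" "prime p"
  shows "rho p t (f * h) = red (int p) (rho p t f * rho p t h)"
proof -
  let ?E = "exps_dvd_part p t"
  have "red (int p) (f * h) = red (int p) (?E f * ?E h)"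
    using red_p_QC_eq_red_exps_dvd_part[OF assms(1,3)] red_p_QC_eq_red_exps_dvd_part[OF assms(2,3)]
    by (rule red_cong_mult)
  then have "red (int p) (?E (f * h)) = red (int p) (?E (?E f * ?E h))"
    by (rule red_exps_dvd_part_cong)
  also have "\<dots> = red (int p) (rho p t f * rho p t h)"
    unfolding exps_dvd_part_mult rho_eq_red_exps_dvd_part by (simp only: red_mult_left red_mult_right)
  finally show ?thesis
    unfolding rho_eq_red_exps_dvd_part .
qed

lemma rho_one: "p > 1 \<Longrightarrow> rho p t 1 = 1"
  by (rule poly_mapping_eqI) (auto simp: lookup_rho lookup_one when_def exps_dvd_def)

lemma rho_in_FpZ:
  assumes "f \<in> QC n p t" "p > 0"
  shows "rho p t f \<in> FpZ n p t"
  unfolding FpZ_def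
proof (intro CollectI conjI allI ballI)
  have "f \<in> Zz n"
    using assms(1) by (simp add: QC_def)
  then show "rho p t f \<in> Zz n"
    unfolding Zz_iff lookup_rho by (metis mod_0)
  show "0 \<le> Poly_Mapping.lookup (rho p t f) d" "Poly_Mapping.lookup (rho p t f) d < int p" for d
    using assms(2) by (auto simp: lookup_rho)
next
  fix d i
  assume "d \<in> Poly_Mapping.keys (rho p t f)"
  then show "p ^ t dvd Poly_Mapping.lookup d i"
    by (auto simp: in_keys_iff lookup_rho exps_dvd_def split: if_splits)
qed

lemma FpZ_subset_QC: "FpZ n p t \<subseteq> QC n p t"
proof
  fix a
  assume a: "a \<in> FpZ n p t"
  have "int p ^ t dvd int (Poly_Mapping.lookup d i) * Poly_Mapping.lookup a d" for i d
  proof (cases "Poly_Mapping.lookup a d = 0")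
    case False
    then have "p ^ t dvd Poly_Mapping.lookup d i"
      using a by (auto simp: FpZ_def in_keys_iff)
    then have "int (p ^ t) dvd int (Poly_Mapping.lookup d i)"
      by (simp only: int_dvd_int_iff)
    then show ?thesis
      by (simp add: dvd_mult2)
  qed simp
  then show "a \<in> QC n p t"
    using a by (simp add: FpZ_def QC_iff_euler coeffs_dvd_def lookup_euler)
qed

lemma rho_fixes_FpZ: "a \<in> FpZ n p t \<Longrightarrow> rho p t a = a"
  by (rule poly_mapping_eqI) (auto simp: FpZ_def lookup_rho exps_dvd_def in_keys_iff)

lemma rho_image_QC:
  assumes "p > 0"
  shows "rho p t ` QC n p t = FpZ n p t"
proof
  show "rho p t ` QC n p t \<subseteq> FpZ n p t"
    using rho_in_FpZ[OF _ assms] by blast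
  show "FpZ n p t \<subseteq> rho p t ` QC n p t"
  proof
    fix a
    assume "a \<in> FpZ n p t"
    then show "a \<in> rho p t ` QC n p t"
      using FpZ_subset_QC by (intro image_eqI[of _ _ a]) (auto simp: rho_fixes_FpZ)
  qed
qed

lemma rho_pred:
  assumes "f \<in> QC n p t" "prime p" "t \<ge> 1"
  shows "rho p (t - 1) f = rho p t f"
proof (rule poly_mapping_eqI)
  fix d
  have "exps_dvd p t d \<Longrightarrow> exps_dvd p (t - 1) d"
    unfolding exps_dvd_def by (meson diff_le_self dvd_trans le_imp_power_dvd)
  then show "Poly_Mapping.lookup (rho p (t - 1) f) d = Poly_Mapping.lookup (rho p t f) d"
    using QC_coeff_dvd_p[OF assms(1,2), of d] by (auto simp: lookup_rho)
qed

lemma rho_eq_imp_diff_p_QC: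
  assumes f: "f \<in> QC n p t" and h: "h \<in> QC n p t" and p: "prime p" and t: "t \<ge> 1"
    and eq: "rho p t f = rho p t h"
  obtains u where "u \<in> QC n p (t - 1)" "f - h = of_nat p * u"
proof -
  have D: "f - h \<in> QC n p t"
    using f h by (rule QC_diff)
  have "int p dvd Poly_Mapping.lookup (f - h) d" for d
  proof (cases "exps_dvd p t d")
    case True
    then have "Poly_Mapping.lookup f d mod int p = Poly_Mapping.lookup h d mod int p"
      using eq by (metis lookup_rho)
    then show ?thesis by (simp add: lookup_minus mod_eq_dvd_iff)
  qed (use QC_coeff_dvd_p[OF D p] in blast)
  then obtain u where "f - h = of_int (int p ^ 1) * u" "u \<in> QC n p (t - 1)"
    using QC_div_prime_power[OF D, of 1] t p by (auto simp: coeffs_dvd_def prime_gt_0_nat)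
  then show ?thesis
    using that by simp
qed

lemma Mset_mult_diff_of_rho_eq:
  assumes p: "prime p" "odd p" and n: "n = 2 * g + 1" and ts: "t \<le> s" and t: "1 \<le> t"
    and f: "f \<in> QC n p t" and h: "h \<in> QC n p t" and eq: "rho p t f = rho p t h"
    and x: "x \<in> Mset n g p s t"
  shows "pis p s (\<lambda>i. red (int p ^ s) f * x i - red (int p ^ s) h * x i) \<in> Mset n g p s (t - 1)"
proof -
  obtain u where u: "u \<in> QC n p (t - 1)" "f - h = of_nat p * u"
    using rho_eq_imp_diff_p_QC[OF f h p(1) t eq] .
  obtain c where c: "Mcoeffs n g p t c" "x = pis p s (Msum n g p s t c)"
    using x by (rule Mset_obtain_Msum)
  have "pis p s (\<lambda>i. red (int p ^ s) f * x i - red (int p ^ s) h * x i)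
      = pis p s (\<lambda>i. f * Msum n g p s t c i - h * Msum n g p s t c i)"
    unfolding c(2) pis_def by (intro ext red_cong_diff red_cong_mult) (simp_all only: red_idem)
  also have "\<dots> = pis p s (\<lambda>i. of_nat p * (u * Msum n g p s t c i))"
    by (simp only: left_diff_distrib[symmetric] u(2) mult.assoc)
  also have "\<dots> = pis p s (\<lambda>i. of_nat p * Msum n g p s t (\<lambda>r l. u * c r l) i)"
    by (simp add: Msum_def sum_distrib_left mult.assoc)
  finally have "pis p s (\<lambda>i. red (int p ^ s) f * x i - red (int p ^ s) h * x i)
      = pis p s (\<lambda>i. of_nat p * Msum n g p s t (\<lambda>r l. u * c r l) i)" .
  moreover have "(\<lambda>i. of_nat p * Msum n g p s t (\<lambda>r l. u * c r l) i) \<in> Mlift n g p s (t - 1)"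
  proof (intro p_Msum_in_Mlift_pred[OF p n ts] ballI)
    fix r l
    assume rl: "r \<in> {1..t}" "l \<in> {1..g}"
    then have "u \<in> QC n p (r - 1)" "c r l \<in> QC n p (r - 1)"
      using QC_mono[OF u(1)] c(1) QC_mono[of "c r l" n p r] by (auto simp: Mcoeffs_def)
    then show "u * c r l \<in> QC n p (r - 1)"
      by (rule QC_mult)
  qed
  ultimately show ?thesis
    unfolding Mset_eq_image_Mlift by simp
qed

lemma pis_mult_commute:
  "pis p s (\<lambda>i. a * pis p s (\<lambda>j. b * x j) i) = pis p s (\<lambda>i. b * pis p s (\<lambda>j. a * x j) i)"
  unfolding pis_def by (simp only: red_mult_right ac_simps)

theorem lemma6p1:
  fixes p g n s t :: nat
  assumes "prime p" and "odd p" and "g \<ge> 1" and "n = 2 * g + 1" and "p > n"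
    and "1 \<le> t" and "t \<le> s"
  shows
    \<comment> \<open>M^{t-1} is contained in M^t, so gr M^t is defined\<close>
    "Mset n g p s (t - 1) \<subseteq> Mset n g p s t
     \<comment> \<open>p M^t \<subseteq> M^{t-1}\<close>
   \<and> (\<forall>x\<in>Mset n g p s t. pis p s (\<lambda>i. of_nat p * x i) \<in> Mset n g p s (t - 1))
     \<comment> \<open>multiplication by pi_s(f), f quasi-constant mod p^t, preserves M^t and M^{t-1}\<close>
   \<and> (\<forall>f\<in>QC n p t.
        (\<forall>x\<in>Mset n g p s t. pis p s (\<lambda>i. red ((int p) ^ s) f * x i) \<in> Mset n g p s t)
      \<and> (\<forall>x\<in>Mset n g p s (t - 1).
           pis p s (\<lambda>i. red ((int p) ^ s) f * x i) \<in> Mset n g p s (t - 1)))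
     \<comment> \<open>rho_t is a surjective ring homomorphism Z[z]_{p^t} \<rightarrow> F_p[z^{p^t}]\<close>
   \<and> (\<forall>f\<in>QC n p t. rho p t f \<in> FpZ n p t)
   \<and> (\<forall>a\<in>FpZ n p t. \<exists>f\<in>QC n p t. rho p t f = a)
   \<and> rho p t 1 = 1
   \<and> (\<forall>f\<in>QC n p t. \<forall>h\<in>QC n p t.
        rho p t (f + h) = red (int p) (rho p t f + rho p t h)
      \<and> rho p t (f * h) = red (int p) (rho p t f * rho p t h))
     \<comment> \<open>the action on gr M^t = M^t / M^{t-1} factors through rho_t\<close>
   \<and> (\<forall>f\<in>QC n p t. \<forall>h\<in>QC n p t. rho p t f = rho p t h \<longrightarrow>
        (\<forall>x\<in>Mset n g p s t.
           pis p s (\<lambda>i. red ((int p) ^ s) f * x i - red ((int p) ^ s) h * x i)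
             \<in> Mset n g p s (t - 1)))
     \<comment> \<open>multiplication by p induces a map gr M^t \<rightarrow> gr M^{t-1} (well defined: p M^{t-1} \<subseteq> M^{t-2},
         where for t = 1 we have M^{t-2} = M^0 = 0, i.e. gr M^0 = 0)\<close>
   \<and> (\<forall>x\<in>Mset n g p s (t - 1). pis p s (\<lambda>i. of_nat p * x i) \<in> Mset n g p s (t - 2))
     \<comment> \<open>compatibility of the F_p[z^{p^t}]-structure on gr M^{t-1} (restricted from F_p[z^{p^{t-1}}])\<close>
   \<and> (t \<ge> 2 \<longrightarrow> (\<forall>f\<in>QC n p t. f \<in> QC n p (t - 1) \<and> rho p (t - 1) f = rho p t f))
     \<comment> \<open>the map induced by p is linear for the action\<close>
   \<and> (\<forall>f\<in>QC n p t. \<forall>x\<in>Mset n g p s t.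
        pis p s (\<lambda>i. of_nat p * pis p s (\<lambda>j. red ((int p) ^ s) f * x j) i)
        = pis p s (\<lambda>i. red ((int p) ^ s) f * pis p s (\<lambda>j. of_nat p * x j) i))"
proof -
  note p = assms(1,2) and n = assms(4)
  have p1: "p > 1"
    using assms(1) by (rule prime_gt_1_nat)
  have "Mset n g p s (t - 1) \<subseteq> Mset n g p s t"
    unfolding Mset_eq_image_Mlift using Mlift_mono[of "t - 1" t] by auto
  moreover have "pis p s (\<lambda>i. of_nat p * x i) \<in> Mset n g p s (t - 2)" if "x \<in> Mset n g p s (t - 1)" for x
    using Mset_mult_p[OF p n _ that] assms(7) by (simp add: numeral_2_eq_2 diff_diff_left)
  moreover have "f \<in> QC n p (t - 1)" if "f \<in> QC n p t" for f
    using QC_mono[OF that] by simp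
  ultimately show ?thesis
    using Mset_mult_p[OF p n assms(7)] Mset_mult_QC rho_image_QC[of p t n, symmetric] p1
      rho_one[OF p1] rho_add rho_mult[OF _ _ assms(1)] Mset_mult_diff_of_rho_eq[OF p n assms(7,6)]
      rho_pred[OF _ assms(1,6)] pis_mult_commute
    by (intro conjI ballI impI) auto
qed

end
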